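(* Suppose that for every $j\ge 0$ the map $F_j$ is nondecreasing in its first argument on $V^k$. Then for every $m\ge 0$, the maps $F_m$ and $F_{m+1}$ have the same fixed points.
   Context: Let $k\ge 2$ be an integer, $V\subseteq\mathbb{R}$ an interval, and $F_0:V^k\to V$ a map. Define maps $F_m:V^k\to V$ recursively by $$F_{m+1}(u_1,\dots,u_k)=F_m\big(F_0(u_1,\dots,u_k),u_1,\dots,u_{k-1}\big),\qquad m\ge 0.$$ A fixed point of $F_m$ is a point $x\in V$ with $F_m(x,\dots,x)=x$. *)

theory Defs
  imports "HOL-Analysis.Analysis"
begin

text \<open>Points of V^k are represented as real lists of length k.
  F_iter F0 m is the map F_m of the paper:
  F_(m+1)(u_1,...,u_k) = F_m(F_0(u_1,...,u_k), u_1, ..., u_(k-1)).\<close>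

fun F_iter :: "(real list \<Rightarrow> real) \<Rightarrow> nat \<Rightarrow> real list \<Rightarrow> real" where
  "F_iter F0 0 us = F0 us"
| "F_iter F0 (Suc m) us = F_iter F0 m (F0 us # butlast us)"

definition fixed_points :: "real set \<Rightarrow> nat \<Rightarrow> (real list \<Rightarrow> real) \<Rightarrow> nat \<Rightarrow> real set" where
  "fixed_points V k F0 m = {x \<in> V. F_iter F0 m (replicate k x) = x}"

end

theory Submission
  imports Defs
begin

text \<open>Every F_m has exactly the fixed points of F_0. If F_0(x,...,x) = x then F_m(x,...,x) = x for
  all m by induction. Conversely, put y = F_0(x,...,x) and suppose y \<ge> x. Since
  F_(j+1)(x,...,x) = F_j(y,x,...,x) \<ge> F_j(x,...,x) by monotonicity in the first argument, induction
  gives F_j(x,...,x) \<ge> y for all j, so a fixed point x of F_j satisfies x \<ge> y, i.e. y = x;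
  the case y \<le> x is symmetric.\<close>

lemma butlast_replicate: "butlast (replicate n x) = replicate (n - 1) x"
  by (induction n) (auto simp: gr0_conv_Suc)

lemma replicate_eq_Cons_pred: "0 < n \<Longrightarrow> replicate n x = x # replicate (n - 1) x"
  by (cases n) auto

lemma F_iter_Suc_replicate:
  "F_iter F0 (Suc j) (replicate k x) = F_iter F0 j (F0 (replicate k x) # replicate (k - 1) x)"
  by (simp add: butlast_replicate)

lemma F_iter_replicate_fixed:
  assumes "0 < k" and "F0 (replicate k x) = x"
  shows "F_iter F0 j (replicate k x) = x"
proof (induction j)
  case (Suc j)
  have "F_iter F0 (Suc j) (replicate k x) = F_iter F0 j (x # replicate (k - 1) x)"
    using F_iter_Suc_replicate assms(2) by metis
  also have "\<dots> = F_iter F0 j (replicate k x)"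
    by (simp only: replicate_eq_Cons_pred[OF \<open>0 < k\<close>])
  finally show ?case
    using Suc by simp
qed (simp add: assms(2))

text \<open>Stated for an arbitrary preorder relation so that it covers both (\<le>) and (\<ge>).\<close>

lemma F_iter_replicate_beyond_F0:
  assumes "reflp R" and "transp R" and "0 < k"
    and y_def: "y = F0 (replicate k x)" and "R x y"
    and mono: "\<And>j. R (F_iter F0 j (x # replicate (k - 1) x)) (F_iter F0 j (y # replicate (k - 1) x))"
  shows "R y (F_iter F0 j (replicate k x))"
proof (induction j)
  case 0
  show ?case
    using \<open>reflp R\<close> y_def by (simp add: reflpD)
next
  case (Suc j)
  have "replicate k x = x # replicate (k - 1) x"
    using replicate_eq_Cons_pred[OF \<open>0 < k\<close>] .
  moreover have "F_iter F0 (Suc j) (replicate k x) = F_iter F0 j (y # replicate (k - 1) x)"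
    unfolding y_def by (rule F_iter_Suc_replicate)
  ultimately have "R (F_iter F0 j (replicate k x)) (F_iter F0 (Suc j) (replicate k x))"
    using mono[of j] by simp
  with Suc show ?case
    using transpD[OF \<open>transp R\<close>] by blast
qed

lemma fixed_points_eq_fixed_points_0:
  assumes "0 < k"
    and closed: "\<And>us. length us = k \<Longrightarrow> set us \<subseteq> V \<Longrightarrow> F0 us \<in> V"
    and mono: "\<And>j x y us. x \<in> V \<Longrightarrow> y \<in> V \<Longrightarrow> x \<le> y \<Longrightarrow>
                 length us = k - 1 \<Longrightarrow> set us \<subseteq> V \<Longrightarrow>
                 F_iter F0 j (x # us) \<le> F_iter F0 j (y # us)"
  shows "fixed_points V k F0 m = fixed_points V k F0 0"
proof -
  have "F_iter F0 m (replicate k x) = x \<longleftrightarrow> F0 (replicate k x) = x" if "x \<in> V" for x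
  proof
    assume "F0 (replicate k x) = x"
    then show "F_iter F0 m (replicate k x) = x"
      using F_iter_replicate_fixed \<open>0 < k\<close> by blast
  next
    assume fixed: "F_iter F0 m (replicate k x) = x"
    define y where "y = F0 (replicate k x)"
    have "y \<in> V"
      unfolding y_def using closed[of "replicate k x"] \<open>x \<in> V\<close> \<open>0 < k\<close> by simp
    have mono_x: "F_iter F0 j (a # replicate (k - 1) x) \<le> F_iter F0 j (b # replicate (k - 1) x)"
      if "a \<in> V" "b \<in> V" "a \<le> b" for j a b
      using mono[of a b "replicate (k - 1) x" j] that \<open>x \<in> V\<close> by (simp add: set_replicate_conv_if)
    show "F0 (replicate k x) = x"
    proof (cases "x \<le> y")
      case True
      then have "y \<le> F_iter F0 m (replicate k x)"
        using F_iter_replicate_beyond_F0[where R = "(\<le>)"] mono_x \<open>y \<in> V\<close> \<open>x \<in> V\<close> \<open>0 < k\<close> y_def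
        by (simp add: reflp_on_def transp_on_def)
      with True fixed y_def show ?thesis by simp
    next
      case False
      then have "y \<ge> F_iter F0 m (replicate k x)"
        using F_iter_replicate_beyond_F0[where R = "(\<ge>)"] mono_x \<open>y \<in> V\<close> \<open>x \<in> V\<close> \<open>0 < k\<close> y_def
        by (simp add: reflp_on_def transp_on_def)
      with False fixed y_def show ?thesis by simp
    qed
  qed
  then show ?thesis
    by (auto simp: fixed_points_def)
qed

theorem mainTheorem2:
  fixes k :: nat and V :: "real set" and F0 :: "real list \<Rightarrow> real"
  assumes "k \<ge> 2"
    and "is_interval V"
    and "\<And>us. length us = k \<Longrightarrow> set us \<subseteq> V \<Longrightarrow> F0 us \<in> V"
    and "\<And>j x y us. x \<in> V \<Longrightarrow> y \<in> V \<Longrightarrow> x \<le> y \<Longrightarrow>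
           length us = k - 1 \<Longrightarrow> set us \<subseteq> V \<Longrightarrow>
           F_iter F0 j (x # us) \<le> F_iter F0 j (y # us)"
  shows "\<forall>m. fixed_points V k F0 m = fixed_points V k F0 (Suc m)"
proof
  fix m
  have "0 < k"
    using assms(1) by simp
  with assms(3,4) show "fixed_points V k F0 m = fixed_points V k F0 (Suc m)"
    using fixed_points_eq_fixed_points_0[of k V F0] by metis
qed

end
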